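(* Let $S=\mathcal{OR}_n$ and $\sigma\in S$. Then (i) $\sigma S=\{\tau\in S: J(\tau)\subseteq J(\sigma)\}$; (ii) $S\sigma=\{\tau\in S: I(\tau)\subseteq I(\sigma)\}$; (iii) if $\mathrm{rk}(\sigma)\ne m$, then $S\sigma S=\{\tau\in S:\mathrm{rk}(\tau)\le\mathrm{rk}(\sigma)\}$; if $\mathrm{rk}(\sigma)=m$, then $S\sigma S=\{\tau\in S:\mathrm{rk}(\tau)<m, \text{ or } \mathrm{rk}(\tau)=m \text{ and } \mathrm{tp}(\tau)=\mathrm{tp}(\sigma)\}$.
   Context: Let $m\ge 1$, $n=2m$, $\mathbf n=\{1,\dots,n\}$, $\theta(i)=n+1-i$, written $\bar i$. A proper subset $I\subset\mathbf n$ is admissible if $I\cap\theta(I)=\emptyset$; $\mathbf n$ and $\emptyset$ are also admissible. For an injective partial map $\sigma$ of $\mathbf n$, $I(\sigma)$ is its domain, $J(\sigma)$ its image, $\mathrm{rk}(\sigma)=|I(\sigma)|$; the product $\sigma\tau$ is composition of partial maps (apply $\tau$ first). $W=\{\sigma\in S_n:\sigma(\bar i)=\overline{\sigma(i)}\ \forall i\}$, $W'=\{\sigma\in W:|\sigma(\{1,\dots,m\})\cap\{m+1,\dots,n\}|\text{ even}\}$. An admissible $m$-subset is of type I if it contains an even number of elements $>m$, type II otherwise. $\mathcal{OR}_n$ consists of the injective partial maps $\sigma$ with: $\mathrm{rk}(\sigma)<m$ and $I(\sigma),J(\sigma)$ admissible; or $\mathrm{rk}(\sigma)=m$ and $I(\sigma),J(\sigma)$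 admissible of the same type; or $\sigma\in W'$. It is a monoid under composition. For $\mathrm{rk}(\sigma)=m$, $\mathrm{tp}(\sigma)$ denotes the type of $I(\sigma)$. *)

theory Defs
  imports Main
begin

text \<open>Throughout, the parameter is m, and n = 2 m. Injective partial maps of
 {1..n} are represented as maps nat \<rightharpoonup> nat with domain and range
 inside {1..n}, injective on their domain. The product sigma tau is
 composition of partial maps applying tau first, i.e. map_comp sigma tau.\<close>

definition theta :: "nat \<Rightarrow> nat \<Rightarrow> nat" where
  "theta n i = n + 1 - i"

definition admissible :: "nat \<Rightarrow> nat set \<Rightarrow> bool" where
  "admissible n I \<longleftrightarrow> I = {1..n} \<or> I = {} \<or>
     (I \<subset> {1..n} \<and> I \<inter> theta n ` I = {})"

definition partial_inj :: "nat \<Rightarrow> (nat \<rightharpoonup> nat) \<Rightarrow> bool" where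
  "partial_inj n \<sigma> \<longleftrightarrow> dom \<sigma> \<subseteq> {1..n} \<and> ran \<sigma> \<subseteq> {1..n} \<and> inj_on \<sigma> (dom \<sigma>)"

definition rk :: "(nat \<rightharpoonup> nat) \<Rightarrow> nat" where
  "rk \<sigma> = card (dom \<sigma>)"

definition W :: "nat \<Rightarrow> (nat \<rightharpoonup> nat) set" where
  "W n = {\<sigma>. partial_inj n \<sigma> \<and> dom \<sigma> = {1..n} \<and>
            (\<forall>i\<in>{1..n}. \<sigma> (theta n i) = map_option (theta n) (\<sigma> i))}"

definition W' :: "nat \<Rightarrow> (nat \<rightharpoonup> nat) set" where
  "W' m = {\<sigma>\<in>W (2*m). even (card ({y. \<exists>x\<in>{1..m}. \<sigma> x = Some y} \<inter> {m+1..2*m}))}"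

text \<open>Type I (True) / type II (False) of an admissible m-subset.\<close>
definition typeI :: "nat \<Rightarrow> nat set \<Rightarrow> bool" where
  "typeI m I \<longleftrightarrow> even (card {x\<in>I. x > m})"

definition tp :: "nat \<Rightarrow> (nat \<rightharpoonup> nat) \<Rightarrow> bool" where
  "tp m \<sigma> = typeI m (dom \<sigma>)"

definition OR :: "nat \<Rightarrow> (nat \<rightharpoonup> nat) set" where
  "OR m = {\<sigma>. partial_inj (2*m) \<sigma> \<and>
     ((rk \<sigma> < m \<and> admissible (2*m) (dom \<sigma>) \<and> admissible (2*m) (ran \<sigma>))
    \<or> (rk \<sigma> = m \<and> admissible (2*m) (dom \<sigma>) \<and> admissible (2*m) (ran \<sigma>)
         \<and> typeI m (dom \<sigma>) = typeI m (ran \<sigma>))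
    \<or> \<sigma> \<in> W' m)}"

end

theory Submission
  imports Defs
begin

text \<open>
  \<open>OR m\<close> is an inverse submonoid of the symmetric inverse monoid on \<open>{1..2*m}\<close>: it is
  closed under composition and under partial inversion. Both closure properties rest on one
  fact: every element of \<open>OR m\<close> maps proper admissible sets to proper admissible sets, and maps
  an admissible \<open>m\<close>-subset contained in its domain to one of the same type. For a signed
  permutation \<open>g\<close> this is a parity count: modulo 2, the numbers of elements above \<open>m\<close> in
  \<open>g ` A\<close> and in \<open>A\<close> differ by the number of \<open>i \<le> m\<close> with \<open>g i > m\<close>, which is even
  exactly for \<open>g \<in> W' m\<close>.

  Given closure, (i) and (ii) hold as in any inverse monoid: if \<open>ran \<tau> \<subseteq> ran \<sigma>\<close> then
  \<open>\<tau> = \<sigma> (\<sigma>\<inverse> \<tau>)\<close>, and dually. For (iii), ranks do not grow under composition, and if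
  \<open>\<rho> \<sigma> \<rho>'\<close> has rank \<open>m\<close> then \<open>\<rho>'\<close> carries its domain onto \<open>dom \<sigma>\<close> preserving the type.
  Conversely an admissible \<open>\<tau>\<close> of small enough rank (and of the type of \<open>\<sigma>\<close> at rank \<open>m\<close>)
  factors as \<open>(\<tau> (\<sigma> \<rho>')\<inverse>) \<sigma> \<rho>'\<close>, where \<open>\<rho>'\<close> is a type-compatible bijection from
  \<open>dom \<tau>\<close> onto a subset of \<open>dom \<sigma>\<close>.
\<close>

subsection \<open>The involution theta and admissible sets\<close>

lemma theta_mem: "x \<in> {1..n} \<Longrightarrow> theta n x \<in> {1..n}"
  by (auto simp: theta_def)

lemma theta_theta: "x \<in> {1..n} \<Longrightarrow> theta n (theta n x) = x"
  by (auto simp: theta_def)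

lemma inj_on_theta: "inj_on (theta n) {1..n}"
  by (auto simp: inj_on_def theta_def)

lemma theta_gt_iff: "x \<in> {1..2*m} \<Longrightarrow> m < theta (2*m) x \<longleftrightarrow> x \<le> m"
  by (auto simp: theta_def)

definition proper_admissible :: "nat \<Rightarrow> nat set \<Rightarrow> bool" where
  "proper_admissible m A \<longleftrightarrow> A \<subseteq> {1..2*m} \<and> A \<inter> theta (2*m) ` A = {}"

text \<open>The admissible \<open>m\<close>-subsets of the paper, the ones that have a type.\<close>

definition transversal :: "nat \<Rightarrow> nat set \<Rightarrow> bool" where
  "transversal m A \<longleftrightarrow> proper_admissible m A \<and> card A = m"

lemma proper_admissible_subset:
  "proper_admissible m A \<Longrightarrow> B \<subseteq> A \<Longrightarrow> proper_admissible m B"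
  unfolding proper_admissible_def by blast

lemma admissible_iff_proper_admissible:
  assumes "m \<ge> 1"
  shows "admissible (2*m) A \<longleftrightarrow> A = {1..2*m} \<or> proper_admissible m A"
proof -
  have "1 \<in> {1..2*m} \<inter> theta (2*m) ` {1..2*m}"
    using assms by (auto simp: theta_def image_iff intro!: bexI[of _ "2*m"])
  then have "\<not> proper_admissible m {1..2*m}"
    unfolding proper_admissible_def by blast
  then show ?thesis
    unfolding admissible_def proper_admissible_def by auto
qed

lemma union_theta_image_subset:
  assumes "A \<subseteq> {1..n}"
  shows "A \<union> theta n ` A \<subseteq> {1..n}"
  using assms theta_mem by blast

lemma card_union_theta_image:
  assumes "proper_admissible m A"
  shows "card (A \<union> theta (2*m) ` A) = 2 * card A"
proof -
  have "A \<subseteq> {1..2*m}"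
    using assms by (simp add: proper_admissible_def)
  then have "card (theta (2*m) ` A) = card A" and "finite A"
    using card_image inj_on_subset[OF inj_on_theta] finite_subset by blast+
  with assms show ?thesis
    by (simp add: card_Un_disjoint proper_admissible_def)
qed

lemma card_proper_admissible_le:
  assumes "proper_admissible m A"
  shows "card A \<le> m"
proof -
  have "A \<union> theta (2*m) ` A \<subseteq> {1..2*m}"
    using assms union_theta_image_subset by (simp add: proper_admissible_def)
  then have "card (A \<union> theta (2*m) ` A) \<le> card {1..2*m}"
    by (rule card_mono[OF finite_atLeastAtMost])
  with card_union_theta_image[OF assms] show ?thesis by simp
qed

lemma transversal_mem_iff:
  assumes "transversal m A" "x \<in> {1..2*m}"
  shows "x \<in> A \<longleftrightarrow> theta (2*m) x \<notin> A"
proof -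
  have adm: "proper_admissible m A" and "card A = m"
    using assms(1) by (simp_all add: transversal_def)
  then have sub: "A \<subseteq> {1..2*m}" and disj: "A \<inter> theta (2*m) ` A = {}"
    by (simp_all add: proper_admissible_def)
  have "card (A \<union> theta (2*m) ` A) = card {1..2*m}"
    using card_union_theta_image[OF adm] \<open>card A = m\<close> by simp
  then have cover: "A \<union> theta (2*m) ` A = {1..2*m}"
    using card_subset_eq[OF finite_atLeastAtMost union_theta_image_subset[OF sub]] by blast
  show ?thesis
  proof
    assume "x \<in> A"
    then show "theta (2*m) x \<notin> A"
      using disj by blast
  next
    assume "theta (2*m) x \<notin> A"
    show "x \<in> A"
    proof (rule ccontr)
      assume "x \<notin> A"
      then obtain y where "y \<in> A" "x = theta (2*m) y"
        using cover assms(2) by blast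
      then have "theta (2*m) x \<in> A"
        using sub theta_theta by auto
      with \<open>theta (2*m) x \<notin> A\<close> show False ..
    qed
  qed
qed

lemma transversal_subset_eq:
  assumes "transversal m A" "proper_admissible m B" "A \<subseteq> B"
  shows "A = B"
proof (rule card_subset_eq)
  show "finite B"
    using assms(2) finite_subset by (auto simp: proper_admissible_def)
  then have "card A \<le> card B"
    using assms(3) by (rule card_mono)
  then show "card A = card B"
    using assms(1) card_proper_admissible_le[OF assms(2)] by (simp add: transversal_def)
qed fact

lemma transversal_lower_half: "transversal m {1..m}"
proof -
  have "{1..m} \<inter> theta (2*m) ` {1..m} = {}"
    by (auto simp: theta_def)
  then show ?thesis
    by (simp add: transversal_def proper_admissible_def)
qed

lemma typeI_lower_half: "typeI m {1..m}"
proof -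
  have "{x \<in> {1..m}. x > m} = {}" by auto
  then show ?thesis
    unfolding typeI_def by (metis card.empty even_zero)
qed

subsection \<open>Types under signed permutations\<close>

lemma bij_betw_transversal_rep:
  assumes "transversal m A"
  shows "bij_betw (\<lambda>i. if i \<in> A then i else theta (2*m) i) {1..m} A"
    (is "bij_betw ?rep _ _")
proof -
  have lower: "i \<in> {1..2*m}" and upper: "m < theta (2*m) i" if "i \<in> {1..m}" for i
    using that theta_gt_iff[of i m] by auto
  have inj: "inj_on ?rep {1..m}"
  proof (rule inj_onI)
    fix i j assume i: "i \<in> {1..m}" and j: "j \<in> {1..m}" and eq: "?rep i = ?rep j"
    have "i \<in> A \<longleftrightarrow> j \<in> A"
      using eq upper[OF i] upper[OF j] i j by (auto split: if_splits)
    then show "i = j"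
      using eq inj_onD[OF inj_on_theta _ lower[OF i] lower[OF j]] by (auto split: if_splits)
  qed
  have into: "?rep ` {1..m} \<subseteq> A"
  proof
    fix y assume "y \<in> ?rep ` {1..m}"
    then obtain i where i: "i \<in> {1..m}" and y: "y = ?rep i" by blast
    have "theta (2*m) i \<in> A" if "i \<notin> A"
      using transversal_mem_iff[OF assms theta_mem[OF lower[OF i]]] theta_theta[OF lower[OF i]] that
      by simp
    then show "y \<in> A"
      using y by auto
  qed
  have "finite A" "card (?rep ` {1..m}) = card A"
    using assms card_image[OF inj] by (auto simp: transversal_def proper_admissible_def
        intro: finite_subset)
  then have "?rep ` {1..m} = A"
    using into card_subset_eq by blast
  with inj show ?thesis
    by (simp add: bij_betw_def)
qed

lemma card_Collect_bij_betw:
  assumes "bij_betw f S T"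
  shows "card {y \<in> T. Q y} = card {x \<in> S. Q (f x)}"
proof -
  have "bij_betw f {x \<in> S. Q (f x)} {y \<in> T. Q y}"
    using assms by (auto simp: bij_betw_def inj_on_def)
  then show ?thesis
    by (simp add: bij_betw_same_card)
qed

lemma even_card_Collect_neq:
  assumes "finite S"
  shows "even (card {x \<in> S. P x \<noteq> Q x})
    \<longleftrightarrow> (even (card {x \<in> S. P x}) \<longleftrightarrow> even (card {x \<in> S. Q x}))"
  using assms
proof (induction S rule: finite_induct)
  case (insert a S)
  have "{x \<in> insert a S. R x} = (if R a then insert a {x \<in> S. R x} else {x \<in> S. R x})" for R
    by auto
  with insert show ?case
    by (auto simp: card_insert_if)
qed simp

text \<open>
  Pair \<open>{1..m}\<close> with \<open>A\<close> by sending \<open>i\<close> to whichever of \<open>i\<close>, \<open>theta (2*m) i\<close> lies in \<open>A\<close>.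
  Since \<open>g\<close> commutes with \<open>theta\<close>, the partner of \<open>i\<close> is sent above \<open>m\<close> iff exactly one of
  \<open>g i > m\<close> and \<open>i \<notin> A\<close> holds; count modulo 2.
\<close>

lemma typeI_image_transversal:
  assumes inj: "inj_on g {1..2*m}" and into: "g ` {1..2*m} \<subseteq> {1..2*m}"
    and commute: "\<And>x. x \<in> {1..2*m} \<Longrightarrow> g (theta (2*m) x) = theta (2*m) (g x)"
    and A: "transversal m A"
  shows "typeI m (g ` A) \<longleftrightarrow> (typeI m A \<longleftrightarrow> typeI m (g ` {1..m}))"
proof -
  let ?rep = "\<lambda>i. if i \<in> A then i else theta (2*m) i"
  have rep: "bij_betw ?rep {1..m} A"
    by (rule bij_betw_transversal_rep[OF A])
  have "A \<subseteq> {1..2*m}"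
    using A by (simp add: transversal_def proper_admissible_def)
  then have gA: "bij_betw g A (g ` A)" and gP: "bij_betw g {1..m} (g ` {1..m})"
    by (auto intro!: inj_on_imp_bij_betw inj_on_subset[OF inj])
  have image_high: "m < g (?rep i) \<longleftrightarrow> (m < g i) \<noteq> (i \<notin> A)" if "i \<in> {1..m}" for i
  proof -
    have i: "i \<in> {1..2*m}"
      using that by auto
    then have "g i \<in> {1..2*m}"
      using into by blast
    then show ?thesis
      using commute[OF i] theta_gt_iff[of "g i" m] by auto
  qed
  have rep_high: "m < ?rep i \<longleftrightarrow> i \<notin> A" if "i \<in> {1..m}" for i
    using that theta_gt_iff[of i m] by auto
  have "card {y \<in> g ` A. m < y} = card {x \<in> A. m < g x}"
    by (rule card_Collect_bij_betw[OF gA])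
  also have "\<dots> = card {i \<in> {1..m}. m < g (?rep i)}"
    by (rule card_Collect_bij_betw[OF rep])
  also have "{i \<in> {1..m}. m < g (?rep i)} = {i \<in> {1..m}. (m < g i) \<noteq> (i \<notin> A)}"
    using image_high by blast
  finally have high_gA: "card {y \<in> g ` A. m < y} = card {i \<in> {1..m}. (m < g i) \<noteq> (i \<notin> A)}" .
  have "card {x \<in> A. m < x} = card {i \<in> {1..m}. m < ?rep i}"
    by (rule card_Collect_bij_betw[OF rep])
  also have "{i \<in> {1..m}. m < ?rep i} = {i \<in> {1..m}. i \<notin> A}"
    using rep_high by blast
  finally have high_A: "card {x \<in> A. m < x} = card {i \<in> {1..m}. i \<notin> A}" .
  have high_gP: "card {y \<in> g ` {1..m}. m < y} = card {i \<in> {1..m}. m < g i}"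
    by (rule card_Collect_bij_betw[OF gP])
  show ?thesis
    unfolding typeI_def high_gA high_A high_gP
    using even_card_Collect_neq[of "{1..m}" "\<lambda>i. m < g i" "\<lambda>i. i \<notin> A"] by simp argo
qed

subsection \<open>Partial injections\<close>

lemma map_comp_assoc: "(f \<circ>\<^sub>m g) \<circ>\<^sub>m h = f \<circ>\<^sub>m (g \<circ>\<^sub>m h)"
  by (rule ext) (simp add: map_comp_def split: option.splits)

lemma restrict_map_comp: "(f \<circ>\<^sub>m g) |` A = f \<circ>\<^sub>m (g |` A)"
  by (rule ext) (simp add: restrict_map_def map_comp_def)

lemma restrict_map_dom_subset: "dom f \<subseteq> A \<Longrightarrow> f |` A = f"
  by (rule ext) (metis domIff restrict_in restrict_out subsetD)

lemma map_comp_restrict_Some: "f \<circ>\<^sub>m (Some |` A) = f |` A"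
  by (rule ext) (simp add: restrict_map_def)

lemma restrict_Some_map_comp: "ran f \<subseteq> A \<Longrightarrow> (Some |` A) \<circ>\<^sub>m f = f"
  by (rule ext) (auto simp: map_comp_def restrict_map_def ran_def split: option.splits)

lemma ran_restrict_map: "ran (f |` A) = {y. \<exists>x\<in>A. f x = Some y}"
  by (auto simp: ran_def restrict_map_def)

lemma ran_restrict_map_subset: "ran (f |` A) \<subseteq> ran f"
  by (auto simp: ran_def restrict_map_def)

lemma dom_map_comp_subset: "dom (f \<circ>\<^sub>m g) \<subseteq> dom g"
  by (auto simp: map_comp_def split: option.splits)

lemma dom_map_comp_eq: "ran g \<subseteq> dom f \<Longrightarrow> dom (f \<circ>\<^sub>m g) = dom g"
  by (auto simp: map_comp_def ran_def split: option.splits)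

lemma ran_map_comp: "ran (f \<circ>\<^sub>m g) = ran (f |` ran g)"
  by (auto simp: map_comp_Some_iff ran_def restrict_map_def)

lemma ran_restrict_Some: "ran (Some |` A) = A"
  by (auto simp: ran_restrict_map)

lemma ran_restrict_map_comp: "ran ((f \<circ>\<^sub>m g) |` A) = ran (f |` ran (g |` A))"
  by (simp add: restrict_map_comp ran_map_comp)

lemma ran_restrict_dom_map_comp: "ran (g |` dom (f \<circ>\<^sub>m g)) \<subseteq> dom f"
  by (auto simp: map_comp_def ran_def restrict_map_def split: option.splits)

lemma inj_on_dom_iff:
  "inj_on f (dom f) \<longleftrightarrow> (\<forall>x y z. f x = Some z \<longrightarrow> f y = Some z \<longrightarrow> x = y)"
proof
  assume inj: "inj_on f (dom f)"
  show "\<forall>x y z. f x = Some z \<longrightarrow> f y = Some z \<longrightarrow> x = y"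
  proof (intro allI impI)
    fix x y z assume "f x = Some z" "f y = Some z"
    then show "x = y"
      using inj_onD[OF inj] by (metis domI)
  qed
next
  assume "\<forall>x y z. f x = Some z \<longrightarrow> f y = Some z \<longrightarrow> x = y"
  then show "inj_on f (dom f)"
    by (intro inj_onI) auto
qed

lemma card_ran_eq_card_dom:
  assumes "inj_on f (dom f)"
  shows "card (ran f) = card (dom f)"
proof -
  have "ran f = (\<lambda>x. the (f x)) ` dom f"
    by (force simp: ran_def dom_def)
  moreover have "inj_on (\<lambda>x. the (f x)) (dom f)"
    using assms unfolding inj_on_dom_iff by (intro inj_onI) auto
  ultimately show ?thesis
    by (simp add: card_image)
qed

definition inv_map :: "('a \<rightharpoonup> 'b) \<Rightarrow> ('b \<rightharpoonup> 'a)" where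
  "inv_map f y = (if y \<in> ran f then Some (THE x. f x = Some y) else None)"

lemma inv_map_Some_iff:
  assumes "inj_on f (dom f)"
  shows "inv_map f y = Some x \<longleftrightarrow> f x = Some y"
proof -
  have "(THE x. f x = Some y) = x" if "f x = Some y" for x
    using that assms[unfolded inj_on_dom_iff] by blast
  then show ?thesis
    by (auto simp: inv_map_def ran_def)
qed

lemma dom_inv_map: "dom (inv_map f) = ran f"
  by (auto simp: inv_map_def split: if_splits)

lemma ran_inv_map: "inj_on f (dom f) \<Longrightarrow> ran (inv_map f) = dom f"
  by (auto simp: ran_def inv_map_Some_iff)

lemma inj_on_inv_map: "inj_on f (dom f) \<Longrightarrow> inj_on (inv_map f) (dom (inv_map f))"
  by (rule inj_onI) (auto simp: inv_map_Some_iff)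

lemma inv_map_map_comp: "inj_on f (dom f) \<Longrightarrow> inv_map f \<circ>\<^sub>m f = Some |` dom f"
  by (rule ext) (auto simp: map_comp_def restrict_map_def inv_map_Some_iff split: option.splits)

lemma map_comp_inv_map: "inj_on f (dom f) \<Longrightarrow> f \<circ>\<^sub>m inv_map f = Some |` ran f"
  by (rule ext)
    (auto simp: map_comp_def restrict_map_def inv_map_Some_iff dom_inv_map[symmetric]
      split: option.splits)

lemma inv_map_cancel_left:
  "inj_on g (dom g) \<Longrightarrow> ran f \<subseteq> ran g \<Longrightarrow> g \<circ>\<^sub>m (inv_map g \<circ>\<^sub>m f) = f"
  by (simp add: map_comp_inv_map restrict_Some_map_comp flip: map_comp_assoc)

lemma inv_map_cancel_right:
  "inj_on g (dom g) \<Longrightarrow> dom f \<subseteq> dom g \<Longrightarrow> (f \<circ>\<^sub>m inv_map g) \<circ>\<^sub>m g = f"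
  by (simp add: map_comp_assoc inv_map_map_comp map_comp_restrict_Some restrict_map_dom_subset)

lemma dom_map_comp_eq_ran_inv_map:
  assumes "inj_on g (dom g)"
  shows "dom (f \<circ>\<^sub>m g) = ran (inv_map g |` dom f)"
  by (auto simp: ran_restrict_map inv_map_Some_iff[OF assms] dom_def map_comp_Some_iff)

lemma partial_inj_inj_on: "partial_inj n f \<Longrightarrow> inj_on f (dom f)"
  by (simp add: partial_inj_def)

lemma partial_inj_restrict_map:
  assumes "partial_inj n f"
  shows "partial_inj n (f |` A)"
proof -
  have "inj_on (f |` A) (dom (f |` A))"
    using assms unfolding partial_inj_def inj_on_dom_iff by (simp add: restrict_map_def)
  then show ?thesis
    using assms ran_restrict_map_subset[of f A] by (auto simp: partial_inj_def)
qed

lemma card_ran_restrict_map: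
  assumes "partial_inj n f"
  shows "card (ran (f |` A)) = card (dom f \<inter> A)"
proof -
  have "inj_on (f |` A) (dom (f |` A))"
    using partial_inj_restrict_map[OF assms] by (simp only: partial_inj_def)
  then show ?thesis
    by (simp add: card_ran_eq_card_dom)
qed

lemma partial_inj_inv_map: "partial_inj n f \<Longrightarrow> partial_inj n (inv_map f)"
  using inj_on_inv_map[of f] by (simp add: partial_inj_def dom_inv_map ran_inv_map)

lemma partial_inj_map_comp:
  assumes "partial_inj n f" "partial_inj n g"
  shows "partial_inj n (f \<circ>\<^sub>m g)"
proof -
  have "inj_on (f \<circ>\<^sub>m g) (dom (f \<circ>\<^sub>m g))"
    unfolding inj_on_dom_iff
  proof (intro allI impI)
    fix x y z assume "(f \<circ>\<^sub>m g) x = Some z" "(f \<circ>\<^sub>m g) y = Some z"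
    then obtain a b where "g x = Some a" "f a = Some z" "g y = Some b" "f b = Some z"
      by (auto simp: map_comp_Some_iff)
    moreover have "inj_on f (dom f)" "inj_on g (dom g)"
      using assms by (simp_all add: partial_inj_def)
    ultimately show "x = y"
      unfolding inj_on_dom_iff by metis
  qed
  moreover have "ran (f \<circ>\<^sub>m g) \<subseteq> ran f"
    unfolding ran_map_comp by (rule ran_restrict_map_subset)
  moreover note dom_map_comp_subset[of f g]
  ultimately show ?thesis
    using assms unfolding partial_inj_def by blast
qed

lemma rk_inv_map: "partial_inj n f \<Longrightarrow> rk (inv_map f) = rk f"
  by (simp add: rk_def dom_inv_map card_ran_eq_card_dom partial_inj_def)

lemma finite_dom_partial_inj: "partial_inj n f \<Longrightarrow> finite (dom f)"
  by (auto simp: partial_inj_def intro: finite_subset)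

lemma rk_map_comp_le_right: "partial_inj n g \<Longrightarrow> rk (f \<circ>\<^sub>m g) \<le> rk g"
  unfolding rk_def by (rule card_mono[OF finite_dom_partial_inj dom_map_comp_subset])

lemma rk_map_comp_le_left:
  assumes "partial_inj n f" "partial_inj n g"
  shows "rk (f \<circ>\<^sub>m g) \<le> rk f"
proof -
  have "rk (f \<circ>\<^sub>m g) = card (ran (f |` ran g))"
    using card_ran_eq_card_dom[of "f \<circ>\<^sub>m g"] partial_inj_map_comp[OF assms]
    by (simp add: rk_def partial_inj_def flip: ran_map_comp)
  also have "\<dots> \<le> card (dom f)"
    using card_ran_restrict_map[OF assms(1)] finite_dom_partial_inj[OF assms(1)]
    by (simp add: card_mono)
  finally show ?thesis
    by (simp add: rk_def)
qed

subsection \<open>Signed permutations\<close>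

lemma W_partial_inj: "\<sigma> \<in> W n \<Longrightarrow> partial_inj n \<sigma>"
  by (simp add: W_def)

lemma dom_W: "\<sigma> \<in> W n \<Longrightarrow> dom \<sigma> = {1..n}"
  by (simp add: W_def)

lemma W_inj: "\<sigma> \<in> W n \<Longrightarrow> inj_on \<sigma> (dom \<sigma>)"
  by (rule partial_inj_inj_on[OF W_partial_inj])

lemma W_Some:
  assumes "\<sigma> \<in> W n" "x \<in> {1..n}"
  obtains y where "y \<in> {1..n}" "\<sigma> x = Some y"
proof -
  obtain y where "\<sigma> x = Some y"
    using assms dom_W[OF assms(1)] by blast
  moreover have "ran \<sigma> \<subseteq> {1..n}"
    using assms(1) by (simp add: W_def partial_inj_def)
  ultimately show ?thesis
    using that by (auto simp: ran_def)
qed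

lemma W_theta: "\<sigma> \<in> W n \<Longrightarrow> x \<in> {1..n} \<Longrightarrow> \<sigma> (theta n x) = map_option (theta n) (\<sigma> x)"
  by (simp add: W_def)

lemma ran_W:
  assumes "\<sigma> \<in> W n"
  shows "ran \<sigma> = {1..n}"
proof (rule card_subset_eq)
  show "ran \<sigma> \<subseteq> {1..n}"
    using assms by (simp add: W_def partial_inj_def)
  show "card (ran \<sigma>) = card {1..n}"
    using card_ran_eq_card_dom[OF W_inj[OF assms]] dom_W[OF assms] by simp
qed simp

lemma rk_W: "\<sigma> \<in> W n \<Longrightarrow> rk \<sigma> = n"
  by (simp add: rk_def dom_W)

lemma ran_restrict_W:
  assumes "\<sigma> \<in> W n" "A \<subseteq> {1..n}"
  shows "ran (\<sigma> |` A) = (\<lambda>x. the (\<sigma> x)) ` A"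
proof -
  have "\<sigma> x = Some y \<longleftrightarrow> y = the (\<sigma> x)" if "x \<in> A" for x y
    using W_Some[OF assms(1)] that assms(2) by (metis option.sel subsetD)
  then show ?thesis
    by (auto simp: ran_restrict_map image_iff)
qed

lemma W_signed_permutation:
  assumes "\<sigma> \<in> W n"
  shows "inj_on (\<lambda>x. the (\<sigma> x)) {1..n}"
    and "(\<lambda>x. the (\<sigma> x)) ` {1..n} = {1..n}"
    and "\<And>x. x \<in> {1..n} \<Longrightarrow> the (\<sigma> (theta n x)) = theta n (the (\<sigma> x))"
proof -
  note inj = W_inj[OF assms]
  show "inj_on (\<lambda>x. the (\<sigma> x)) {1..n}"
  proof (rule inj_onI)
    fix x y assume x: "x \<in> {1..n}" and y: "y \<in> {1..n}" and eq: "the (\<sigma> x) = the (\<sigma> y)"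
    obtain a b where "\<sigma> x = Some a" "\<sigma> y = Some b"
      using W_Some[OF assms x] W_Some[OF assms y] by metis
    with eq have "\<sigma> x = \<sigma> y"
      by simp
    then show "x = y"
      using inj_onD[OF inj] x y dom_W[OF assms] by blast
  qed
  show "(\<lambda>x. the (\<sigma> x)) ` {1..n} = {1..n}"
    using ran_restrict_W[OF assms order_refl] ran_W[OF assms] dom_W[OF assms]
      restrict_map_dom_subset[of \<sigma> "{1..n}"] by simp
  show "the (\<sigma> (theta n x)) = theta n (the (\<sigma> x))" if x: "x \<in> {1..n}" for x
  proof -
    obtain y where "\<sigma> x = Some y"
      using W_Some[OF assms x] by metis
    then show ?thesis
      using W_theta[OF assms x] by simp
  qed
qed

lemma W_map_comp:
  assumes "\<sigma> \<in> W n" "\<tau> \<in> W n"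
  shows "\<sigma> \<circ>\<^sub>m \<tau> \<in> W n"
proof -
  have "dom (\<sigma> \<circ>\<^sub>m \<tau>) = {1..n}"
    using dom_map_comp_eq[of \<tau> \<sigma>] ran_W[OF assms(2)] dom_W[OF assms(1)] dom_W[OF assms(2)] by simp
  moreover have "(\<sigma> \<circ>\<^sub>m \<tau>) (theta n x) = map_option (theta n) ((\<sigma> \<circ>\<^sub>m \<tau>) x)"
    if x: "x \<in> {1..n}" for x
  proof -
    obtain y where "y \<in> {1..n}" "\<tau> x = Some y"
      using W_Some[OF assms(2) x] .
    then show ?thesis
      using W_theta[OF assms(2) x] W_theta[OF assms(1)] by simp
  qed
  ultimately show ?thesis
    using partial_inj_map_comp[OF W_partial_inj[OF assms(1)] W_partial_inj[OF assms(2)]]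
    by (simp add: W_def)
qed

lemma W_inv_map:
  assumes "\<sigma> \<in> W n"
  shows "inv_map \<sigma> \<in> W n"
proof -
  note inj = W_inj[OF assms]
  have "inv_map \<sigma> (theta n y) = map_option (theta n) (inv_map \<sigma> y)" if y: "y \<in> {1..n}" for y
  proof -
    have "y \<in> ran \<sigma>"
      using y ran_W[OF assms] by simp
    then obtain x where x: "\<sigma> x = Some y"
      by (auto simp: ran_def)
    then have "x \<in> {1..n}"
      using dom_W[OF assms] by blast
    then have "\<sigma> (theta n x) = Some (theta n y)"
      using W_theta[OF assms] x by simp
    then have "inv_map \<sigma> (theta n y) = Some (theta n x)" "inv_map \<sigma> y = Some x"
      using x inv_map_Some_iff[OF inj] by blast+
    then show ?thesis
      by simp
  qed
  moreover have "dom (inv_map \<sigma>) = {1..n}"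
    using ran_W[OF assms] by (simp add: dom_inv_map)
  ultimately show ?thesis
    using partial_inj_inv_map[OF W_partial_inj[OF assms]] unfolding W_def by blast
qed

lemma proper_admissible_ran_restrict_W:
  assumes "\<sigma> \<in> W (2*m)" "proper_admissible m A"
  shows "proper_admissible m (ran (\<sigma> |` A))"
proof -
  let ?g = "\<lambda>x. the (\<sigma> x)"
  note g = W_signed_permutation[OF assms(1)]
  have A: "A \<subseteq> {1..2*m}" "A \<inter> theta (2*m) ` A = {}"
    using assms(2) by (simp_all add: proper_admissible_def)
  have "?g ` A \<inter> theta (2*m) ` ?g ` A = {}"
  proof (rule ccontr)
    assume "?g ` A \<inter> theta (2*m) ` ?g ` A \<noteq> {}"
    then obtain a b where ab: "a \<in> A" "b \<in> A" "?g a = theta (2*m) (?g b)"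
      by blast
    then have "?g a = ?g (theta (2*m) b)"
      using g(3) A(1) by auto
    then have "a = theta (2*m) b"
      using inj_onD[OF g(1)] ab A(1) theta_mem by blast
    then show False
      using ab A(2) by blast
  qed
  moreover have "?g ` A \<subseteq> {1..2*m}"
    using g(2) A(1) by blast
  ultimately show ?thesis
    using ran_restrict_W[OF assms(1) A(1)] by (simp add: proper_admissible_def)
qed

lemma transversal_ran_restrict_W:
  assumes "\<sigma> \<in> W (2*m)" "transversal m A"
  shows "transversal m (ran (\<sigma> |` A))"
proof -
  have "A \<subseteq> dom \<sigma>"
    using assms by (simp add: dom_W transversal_def proper_admissible_def)
  then show ?thesis
    using assms proper_admissible_ran_restrict_W card_ran_restrict_map[OF W_partial_inj[OF assms(1)]]
    by (simp add: transversal_def Int_absorb1)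
qed

lemma typeI_ran_restrict_W:
  assumes "\<sigma> \<in> W (2*m)" "transversal m A"
  shows "typeI m (ran (\<sigma> |` A)) \<longleftrightarrow> (typeI m A \<longleftrightarrow> typeI m (ran (\<sigma> |` {1..m})))"
proof -
  note g = W_signed_permutation[OF assms(1)]
  have "A \<subseteq> {1..2*m}"
    using assms(2) by (simp add: transversal_def proper_admissible_def)
  moreover have "{1..m} \<subseteq> {1..2*m}"
    by simp
  ultimately show ?thesis
    using typeI_image_transversal[where g = "\<lambda>x. the (\<sigma> x)",
        OF g(1) equalityD1[OF g(2)] g(3) assms(2)]
    by (simp only: ran_restrict_W[OF assms(1)])
qed

lemma W'_iff: "\<sigma> \<in> W' m \<longleftrightarrow> \<sigma> \<in> W (2*m) \<and> typeI m (ran (\<sigma> |` {1..m}))"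
proof -
  have "ran (\<sigma> |` {1..m}) \<inter> {m+1..2*m} = {y \<in> ran (\<sigma> |` {1..m}). m < y}"
    if "\<sigma> \<in> W (2*m)"
    using that ran_restrict_map_subset[of \<sigma> "{1..m}"] ran_W[of \<sigma> "2*m"] by auto
  then show ?thesis
    by (auto simp: W'_def typeI_def ran_restrict_map)
qed

lemma typeI_ran_restrict_W':
  "\<sigma> \<in> W' m \<Longrightarrow> transversal m A \<Longrightarrow> typeI m (ran (\<sigma> |` A)) \<longleftrightarrow> typeI m A"
  using typeI_ran_restrict_W by (auto simp: W'_iff)

lemma W'_map_comp:
  assumes "\<sigma> \<in> W' m" "\<tau> \<in> W' m"
  shows "\<sigma> \<circ>\<^sub>m \<tau> \<in> W' m"
proof -
  have "\<sigma> \<in> W (2*m)" "\<tau> \<in> W (2*m)"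
    using assms by (simp_all add: W'_iff)
  moreover have "typeI m (ran (\<tau> |` {1..m}))"
    using assms(2) by (simp add: W'_iff)
  ultimately show ?thesis
    using W_map_comp typeI_ran_restrict_W'[OF assms(1)]
      transversal_ran_restrict_W[OF _ transversal_lower_half]
    by (simp add: W'_iff ran_restrict_map_comp)
qed

lemma W'_inv_map:
  assumes "\<sigma> \<in> W' m"
  shows "inv_map \<sigma> \<in> W' m"
proof -
  have W: "\<sigma> \<in> W (2*m)"
    using assms by (simp add: W'_iff)
  let ?B = "ran (inv_map \<sigma> |` {1..m})"
  have "ran (\<sigma> |` ?B) = ran ((\<sigma> \<circ>\<^sub>m inv_map \<sigma>) |` {1..m})"
    by (simp add: ran_restrict_map_comp)
  also have "\<dots> = {1..m}"
    using W_partial_inj[OF W] ran_W[OF W]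
    by (simp add: map_comp_inv_map partial_inj_def ran_restrict_Some Int_absorb1)
  finally have "typeI m ?B"
    using typeI_ran_restrict_W'[OF assms transversal_ran_restrict_W[OF W_inv_map[OF W]
          transversal_lower_half]] typeI_lower_half by simp
  then show ?thesis
    using W_inv_map[OF W] by (simp add: W'_iff)
qed

subsection \<open>Closure of OR under composition and inversion\<close>

text \<open>
  The elements of \<open>OR m\<close> outside \<open>W' m\<close> (see \<open>OR_eq\<close>). Unlike \<open>admissible\<close>,
  \<open>proper_admissible\<close> passes to subsets, which makes this description the convenient one.
\<close>

definition OR_low :: "nat \<Rightarrow> (nat \<rightharpoonup> nat) \<Rightarrow> bool" where
  "OR_low m \<sigma> \<longleftrightarrow> partial_inj (2*m) \<sigma> \<and> proper_admissible m (dom \<sigma>)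
     \<and> proper_admissible m (ran \<sigma>) \<and> (rk \<sigma> = m \<longrightarrow> typeI m (dom \<sigma>) = typeI m (ran \<sigma>))"

lemma rk_OR_low_le: "OR_low m \<sigma> \<Longrightarrow> rk \<sigma> \<le> m"
  by (simp add: OR_low_def rk_def card_proper_admissible_le)

lemma card_ran_OR_low: "OR_low m \<sigma> \<Longrightarrow> card (ran \<sigma>) = rk \<sigma>"
  by (simp add: OR_low_def partial_inj_def rk_def card_ran_eq_card_dom)

lemma OR_partial_inj: "\<sigma> \<in> OR m \<Longrightarrow> partial_inj (2*m) \<sigma>"
  by (simp add: OR_def)

lemma OR_eq:
  assumes "m \<ge> 1"
  shows "OR m = Collect (OR_low m) \<union> W' m"
proof (intro set_eqI iffI)
  fix \<sigma> assume \<sigma>: "\<sigma> \<in> OR m"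
  show "\<sigma> \<in> Collect (OR_low m) \<union> W' m"
  proof (cases "\<sigma> \<in> W' m")
    case False
    then have adm: "admissible (2*m) (dom \<sigma>)" "admissible (2*m) (ran \<sigma>)" and "rk \<sigma> \<le> m"
      and type: "rk \<sigma> = m \<longrightarrow> typeI m (dom \<sigma>) = typeI m (ran \<sigma>)"
      using \<sigma> by (auto simp: OR_def)
    have "card (ran \<sigma>) = rk \<sigma>"
      using OR_partial_inj[OF \<sigma>] by (simp add: partial_inj_def rk_def card_ran_eq_card_dom)
    then have "dom \<sigma> \<noteq> {1..2*m}" "ran \<sigma> \<noteq> {1..2*m}"
      using \<open>rk \<sigma> \<le> m\<close> assms by (auto simp: rk_def)
    then have "OR_low m \<sigma>"
      using adm type OR_partial_inj[OF \<sigma>]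
      by (simp add: OR_low_def admissible_iff_proper_admissible[OF assms])
    then show ?thesis
      by simp
  qed simp
next
  fix \<sigma> assume "\<sigma> \<in> Collect (OR_low m) \<union> W' m"
  then show "\<sigma> \<in> OR m"
  proof
    assume "\<sigma> \<in> Collect (OR_low m)"
    then have "OR_low m \<sigma>" "rk \<sigma> \<le> m"
      using rk_OR_low_le by auto
    then show "\<sigma> \<in> OR m"
      by (auto simp: OR_def OR_low_def admissible_iff_proper_admissible[OF assms])
  next
    assume "\<sigma> \<in> W' m"
    then show "\<sigma> \<in> OR m"
      by (simp add: OR_def W'_iff W_partial_inj)
  qed
qed

lemma OR_cases:
  assumes "m \<ge> 1" "\<sigma> \<in> OR m"
  obtains (low) "OR_low m \<sigma>" | (signed) "\<sigma> \<in> W' m"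
  using assms OR_eq by blast

lemma OR_low_of_rk_le:
  assumes "m \<ge> 1" "\<sigma> \<in> OR m" "rk \<sigma> \<le> m"
  shows "OR_low m \<sigma>"
  using assms(1,2)
proof (cases rule: OR_cases)
  case low
  then show ?thesis .
next
  case signed
  then show ?thesis
    using assms rk_W[of \<sigma> "2*m"] by (simp add: W'_iff)
qed

lemma proper_admissible_ran_restrict_OR:
  assumes "m \<ge> 1" "\<rho> \<in> OR m" "proper_admissible m A"
  shows "proper_admissible m (ran (\<rho> |` A))"
  using assms(1,2)
proof (cases rule: OR_cases)
  case low
  then show ?thesis
    using proper_admissible_subset[OF _ ran_restrict_map_subset] unfolding OR_low_def by blast
next
  case signed
  then show ?thesis
    using proper_admissible_ran_restrict_W assms(3) by (simp add: W'_iff)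
qed

lemma transversal_ran_restrict_OR:
  assumes "m \<ge> 1" "\<rho> \<in> OR m" "transversal m A" "A \<subseteq> dom \<rho>"
  shows "transversal m (ran (\<rho> |` A)) \<and> typeI m (ran (\<rho> |` A)) = typeI m A"
  using assms(1,2)
proof (cases rule: OR_cases)
  case low
  then have "A = dom \<rho>"
    using transversal_subset_eq assms(3,4) by (simp add: OR_low_def)
  then show ?thesis
    using low assms(3) card_ran_OR_low[OF low]
    by (simp add: restrict_map_dom_subset transversal_def OR_low_def rk_def)
next
  case signed
  then show ?thesis
    using transversal_ran_restrict_W typeI_ran_restrict_W' assms(3) by (simp add: W'_iff)
qed

lemma OR_inv_map:
  assumes "m \<ge> 1" "\<rho> \<in> OR m"
  shows "inv_map \<rho> \<in> OR m"
  using assms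
proof (cases rule: OR_cases)
  case low
  then have "OR_low m (inv_map \<rho>)"
    using rk_inv_map partial_inj_inv_map
    by (auto simp: OR_low_def dom_inv_map ran_inv_map partial_inj_def)
  then show ?thesis
    using OR_eq[OF assms(1)] by simp
next
  case signed
  then show ?thesis
    using W'_inv_map OR_eq[OF assms(1)] by simp
qed

lemma proper_admissible_dom_map_comp_OR:
  assumes "m \<ge> 1" "\<sigma> \<in> OR m" "\<tau> \<in> OR m" "OR_low m \<sigma> \<or> OR_low m \<tau>"
  shows "proper_admissible m (dom (\<sigma> \<circ>\<^sub>m \<tau>))"
proof (cases "OR_low m \<tau>")
  case True
  then have "proper_admissible m (dom \<tau>)"
    by (simp add: OR_low_def)
  then show ?thesis
    by (rule proper_admissible_subset[OF _ dom_map_comp_subset])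
next
  case False
  then have "OR_low m \<sigma>"
    using assms(4) by blast
  then have "proper_admissible m (dom \<sigma>)"
    by (simp add: OR_low_def)
  then show ?thesis
    using proper_admissible_ran_restrict_OR[OF assms(1) OR_inv_map[OF assms(1,3)]]
    by (simp add: dom_map_comp_eq_ran_inv_map[OF partial_inj_inj_on[OF OR_partial_inj[OF assms(3)]]])
qed

lemma proper_admissible_ran_map_comp_OR:
  assumes "m \<ge> 1" "\<sigma> \<in> OR m" "\<tau> \<in> OR m" "OR_low m \<sigma> \<or> OR_low m \<tau>"
  shows "proper_admissible m (ran (\<sigma> \<circ>\<^sub>m \<tau>))"
proof (cases "OR_low m \<sigma>")
  case True
  then have "proper_admissible m (ran \<sigma>)"
    by (simp add: OR_low_def)
  then show ?thesis
    unfolding ran_map_comp by (rule proper_admissible_subset[OF _ ran_restrict_map_subset])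
next
  case False
  then have "OR_low m \<tau>"
    using assms(4) by blast
  then have "proper_admissible m (ran \<tau>)"
    by (simp add: OR_low_def)
  then show ?thesis
    using proper_admissible_ran_restrict_OR[OF assms(1,2)] by (simp add: ran_map_comp)
qed

lemma typeI_dom_ran_map_comp_OR:
  assumes "m \<ge> 1" "\<sigma> \<in> OR m" "\<tau> \<in> OR m" "transversal m (dom (\<sigma> \<circ>\<^sub>m \<tau>))"
  shows "typeI m (dom (\<sigma> \<circ>\<^sub>m \<tau>)) = typeI m (ran (\<sigma> \<circ>\<^sub>m \<tau>))"
proof -
  let ?D = "dom (\<sigma> \<circ>\<^sub>m \<tau>)"
  let ?E = "ran (\<tau> |` ?D)"
  have E: "transversal m ?E" "typeI m ?E = typeI m ?D"
    using transversal_ran_restrict_OR[OF assms(1,3,4) dom_map_comp_subset] by blast+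
  have "typeI m (ran (\<sigma> |` ?E)) = typeI m ?E"
    using transversal_ran_restrict_OR[OF assms(1,2) E(1) ran_restrict_dom_map_comp] by blast
  moreover have "ran (\<sigma> |` ?E) = ran (\<sigma> \<circ>\<^sub>m \<tau>)"
    unfolding ran_restrict_map_comp[symmetric] by (simp add: restrict_map_dom_subset)
  ultimately show ?thesis
    using E(2) by simp
qed

lemma OR_low_map_comp:
  assumes "m \<ge> 1" "\<sigma> \<in> OR m" "\<tau> \<in> OR m" "OR_low m \<sigma> \<or> OR_low m \<tau>"
  shows "OR_low m (\<sigma> \<circ>\<^sub>m \<tau>)"
proof -
  have "partial_inj (2*m) (\<sigma> \<circ>\<^sub>m \<tau>)"
    using partial_inj_map_comp OR_partial_inj assms(2,3) by blast
  moreover have "proper_admissible m (dom (\<sigma> \<circ>\<^sub>m \<tau>))"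
    by (rule proper_admissible_dom_map_comp_OR[OF assms])
  moreover have "proper_admissible m (ran (\<sigma> \<circ>\<^sub>m \<tau>))"
    by (rule proper_admissible_ran_map_comp_OR[OF assms])
  ultimately show ?thesis
    using typeI_dom_ran_map_comp_OR[OF assms(1-3)] by (simp add: OR_low_def transversal_def rk_def)
qed

lemma OR_map_comp:
  assumes "m \<ge> 1" "\<sigma> \<in> OR m" "\<tau> \<in> OR m"
  shows "\<sigma> \<circ>\<^sub>m \<tau> \<in> OR m"
proof (cases "\<sigma> \<in> W' m \<and> \<tau> \<in> W' m")
  case True
  then show ?thesis
    using W'_map_comp OR_eq[OF assms(1)] by simp
next
  case False
  then have "OR_low m \<sigma> \<or> OR_low m \<tau>"
    using assms OR_eq by blast
  then show ?thesis
    using OR_low_map_comp[OF assms] OR_eq[OF assms(1)] by simp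
qed

subsection \<open>Principal ideals\<close>

lemma rk_two_sided_le:
  assumes "partial_inj n \<rho>" "partial_inj n \<sigma>" "partial_inj n \<rho>'"
  shows "rk (\<rho> \<circ>\<^sub>m \<sigma> \<circ>\<^sub>m \<rho>') \<le> rk \<sigma>"
proof -
  have "rk (\<rho> \<circ>\<^sub>m \<sigma> \<circ>\<^sub>m \<rho>') \<le> rk (\<rho> \<circ>\<^sub>m \<sigma>)"
    by (rule rk_map_comp_le_left[OF partial_inj_map_comp[OF assms(1,2)] assms(3)])
  also have "\<dots> \<le> rk \<sigma>"
    by (rule rk_map_comp_le_right[OF assms(2)])
  finally show ?thesis .
qed

lemma OR_right_ideal_eq:
  assumes "m \<ge> 1" "\<sigma> \<in> OR m"
  shows "{\<sigma> \<circ>\<^sub>m \<rho> | \<rho>. \<rho> \<in> OR m} = {\<tau> \<in> OR m. ran \<tau> \<subseteq> ran \<sigma>}"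
proof (intro set_eqI iffI)
  fix \<tau> assume "\<tau> \<in> {\<sigma> \<circ>\<^sub>m \<rho> | \<rho>. \<rho> \<in> OR m}"
  then obtain \<rho> where "\<tau> = \<sigma> \<circ>\<^sub>m \<rho>" "\<rho> \<in> OR m"
    by blast
  then show "\<tau> \<in> {\<tau> \<in> OR m. ran \<tau> \<subseteq> ran \<sigma>}"
    using OR_map_comp[OF assms] ran_restrict_map_subset[of \<sigma> "ran \<rho>"] by (simp add: ran_map_comp)
next
  fix \<tau> assume \<tau>: "\<tau> \<in> {\<tau> \<in> OR m. ran \<tau> \<subseteq> ran \<sigma>}"
  have "\<tau> = \<sigma> \<circ>\<^sub>m (inv_map \<sigma> \<circ>\<^sub>m \<tau>)"
    using \<tau> inv_map_cancel_left[OF partial_inj_inj_on[OF OR_partial_inj[OF assms(2)]], of \<tau>] by simp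
  moreover have "inv_map \<sigma> \<circ>\<^sub>m \<tau> \<in> OR m"
    using \<tau> OR_map_comp[OF assms(1) OR_inv_map[OF assms]] by simp
  ultimately show "\<tau> \<in> {\<sigma> \<circ>\<^sub>m \<rho> | \<rho>. \<rho> \<in> OR m}"
    by blast
qed

lemma OR_left_ideal_eq:
  assumes "m \<ge> 1" "\<sigma> \<in> OR m"
  shows "{\<rho> \<circ>\<^sub>m \<sigma> | \<rho>. \<rho> \<in> OR m} = {\<tau> \<in> OR m. dom \<tau> \<subseteq> dom \<sigma>}"
proof (intro set_eqI iffI)
  fix \<tau> assume "\<tau> \<in> {\<rho> \<circ>\<^sub>m \<sigma> | \<rho>. \<rho> \<in> OR m}"
  then obtain \<rho> where "\<tau> = \<rho> \<circ>\<^sub>m \<sigma>" "\<rho> \<in> OR m"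
    by blast
  then show "\<tau> \<in> {\<tau> \<in> OR m. dom \<tau> \<subseteq> dom \<sigma>}"
    using OR_map_comp[OF assms(1) _ assms(2)] dom_map_comp_subset[of \<rho> \<sigma>] by simp
next
  fix \<tau> assume \<tau>: "\<tau> \<in> {\<tau> \<in> OR m. dom \<tau> \<subseteq> dom \<sigma>}"
  have "\<tau> = (\<tau> \<circ>\<^sub>m inv_map \<sigma>) \<circ>\<^sub>m \<sigma>"
    using \<tau> inv_map_cancel_right[OF partial_inj_inj_on[OF OR_partial_inj[OF assms(2)]], of \<tau>] by simp
  moreover have "\<tau> \<circ>\<^sub>m inv_map \<sigma> \<in> OR m"
    using \<tau> OR_map_comp[OF assms(1) _ OR_inv_map[OF assms]] by simp
  ultimately show "\<tau> \<in> {\<rho> \<circ>\<^sub>m \<sigma> | \<rho>. \<rho> \<in> OR m}"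
    by blast
qed

lemma obtain_OR_low_with_dom_ran:
  assumes "proper_admissible m A" "proper_admissible m B" "card A = card B"
    and "card A = m \<Longrightarrow> typeI m A = typeI m B"
  obtains \<rho> where "OR_low m \<rho>" "dom \<rho> = A" "ran \<rho> = B"
proof -
  have sub: "A \<subseteq> {1..2*m}" "B \<subseteq> {1..2*m}"
    using assms(1,2) by (simp_all add: proper_admissible_def)
  then have "finite A" "finite B"
    by (auto intro: finite_subset)
  then obtain h where h: "bij_betw h A B"
    using assms(3) finite_same_card_bij by blast
  define \<rho> where "\<rho> = (Some \<circ> h) |` A"
  have dom: "dom \<rho> = A"
    by (auto simp: \<rho>_def restrict_map_def split: if_splits)
  have ran: "ran \<rho> = B"
    using h by (auto simp: \<rho>_def ran_restrict_map bij_betw_def)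
  have "inj_on \<rho> (dom \<rho>)"
    using h unfolding dom by (auto simp: \<rho>_def bij_betw_def inj_on_def)
  then have "OR_low m \<rho>"
    using assms sub by (simp add: OR_low_def partial_inj_def dom ran rk_def)
  with dom ran show ?thesis
    using that by blast
qed

lemma OR_two_sided_ideal_subset:
  assumes "m \<ge> 1" "\<sigma> \<in> OR m"
  shows "{\<rho> \<circ>\<^sub>m \<sigma> \<circ>\<^sub>m \<rho>' | \<rho> \<rho>'. \<rho> \<in> OR m \<and> \<rho>' \<in> OR m} \<subseteq> {\<tau> \<in> OR m. rk \<tau> \<le> rk \<sigma>}"
proof
  fix \<tau> assume "\<tau> \<in> {\<rho> \<circ>\<^sub>m \<sigma> \<circ>\<^sub>m \<rho>' | \<rho> \<rho>'. \<rho> \<in> OR m \<and> \<rho>' \<in> OR m}"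
  then obtain \<rho> \<rho>' where \<tau>: "\<tau> = \<rho> \<circ>\<^sub>m \<sigma> \<circ>\<^sub>m \<rho>'" and "\<rho> \<in> OR m" "\<rho>' \<in> OR m"
    by blast
  then have "\<tau> \<in> OR m"
    using OR_map_comp[OF assms(1)] assms(2) by blast
  moreover have "rk \<tau> \<le> rk \<sigma>"
    unfolding \<tau> using rk_two_sided_le OR_partial_inj \<open>\<rho> \<in> OR m\<close> \<open>\<rho>' \<in> OR m\<close> assms(2) by blast
  ultimately show "\<tau> \<in> {\<tau> \<in> OR m. rk \<tau> \<le> rk \<sigma>}"
    by blast
qed

text \<open>
  \<open>\<rho>'\<close> maps \<open>dom (\<rho> \<sigma> \<rho>')\<close> type-preservingly onto a transversal inside \<open>dom \<sigma>\<close>,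
  that is, onto \<open>dom \<sigma>\<close>.
\<close>

lemma tp_two_sided_multiple:
  assumes "m \<ge> 1" "\<rho> \<in> OR m" "\<sigma> \<in> OR m" "\<rho>' \<in> OR m"
    and "rk \<sigma> = m" "rk (\<rho> \<circ>\<^sub>m \<sigma> \<circ>\<^sub>m \<rho>') = m"
  shows "tp m (\<rho> \<circ>\<^sub>m \<sigma> \<circ>\<^sub>m \<rho>') = tp m \<sigma>"
proof -
  let ?\<tau> = "\<rho> \<circ>\<^sub>m \<sigma> \<circ>\<^sub>m \<rho>'"
  let ?E = "ran (\<rho>' |` dom ?\<tau>)"
  have "?\<tau> \<in> OR m"
    using OR_map_comp[OF assms(1)] assms(2-4) by blast
  then have "transversal m (dom ?\<tau>)"
    using OR_low_of_rk_le[OF assms(1)] assms(6) by (simp add: OR_low_def transversal_def rk_def)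
  then have E: "transversal m ?E" "typeI m ?E = typeI m (dom ?\<tau>)"
    using transversal_ran_restrict_OR[OF assms(1,4) _ dom_map_comp_subset] by blast+
  have "?E \<subseteq> dom \<sigma>"
    using ran_restrict_dom_map_comp[of \<rho>' "\<rho> \<circ>\<^sub>m \<sigma>"] dom_map_comp_subset[of \<rho> \<sigma>] by blast
  moreover have "proper_admissible m (dom \<sigma>)"
    using OR_low_of_rk_le[OF assms(1,3)] assms(5) by (simp add: OR_low_def)
  ultimately have "?E = dom \<sigma>"
    using transversal_subset_eq[OF E(1)] by blast
  then show ?thesis
    using E(2) by (simp add: tp_def)
qed

lemma OR_low_mem_two_sided_ideal:
  assumes "m \<ge> 1" "OR_low m \<sigma>" "OR_low m \<tau>" "rk \<tau> \<le> rk \<sigma>"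
    and "rk \<tau> = m \<Longrightarrow> tp m \<tau> = tp m \<sigma>"
  shows "\<tau> \<in> {\<rho> \<circ>\<^sub>m \<sigma> \<circ>\<^sub>m \<rho>' | \<rho> \<rho>'. \<rho> \<in> OR m \<and> \<rho>' \<in> OR m}"
proof -
  have OR: "\<sigma> \<in> OR m" "\<tau> \<in> OR m"
    using assms(2,3) OR_eq[OF assms(1)] by simp_all
  have "rk \<tau> \<le> card (dom \<sigma>)"
    using assms(4) by (simp add: rk_def)
  then obtain C where C: "C \<subseteq> dom \<sigma>" "card C = rk \<tau>"
    by (meson obtain_subset_with_card_n)
  have "C = dom \<sigma>" if "rk \<tau> = m"
    using C that assms(4) rk_OR_low_le[OF assms(2)] finite_dom_partial_inj OR_partial_inj[OF OR(1)]
    by (metis card_subset_eq le_antisym rk_def)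
  then have "card (dom \<tau>) = m \<Longrightarrow> typeI m (dom \<tau>) = typeI m C"
    using assms(5) by (simp add: rk_def tp_def)
  moreover have "proper_admissible m (dom \<tau>)" "proper_admissible m C"
    using assms(2,3) C(1) proper_admissible_subset by (auto simp: OR_low_def)
  moreover have "card (dom \<tau>) = card C"
    using C(2) by (simp add: rk_def)
  ultimately obtain \<rho>' where \<rho>': "OR_low m \<rho>'" "dom \<rho>' = dom \<tau>" "ran \<rho>' = C"
    using obtain_OR_low_with_dom_ran by metis
  let ?X = "\<sigma> \<circ>\<^sub>m \<rho>'"
  have "?X \<in> OR m"
    using OR_map_comp[OF assms(1) OR(1)] \<rho>'(1) OR_eq[OF assms(1)] by simp
  have "dom ?X = dom \<tau>"
    using dom_map_comp_eq[of \<rho>' \<sigma>] \<rho>' C(1) by simp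
  then have "\<tau> = (\<tau> \<circ>\<^sub>m inv_map ?X) \<circ>\<^sub>m \<sigma> \<circ>\<^sub>m \<rho>'"
    using inv_map_cancel_right[OF partial_inj_inj_on[OF OR_partial_inj[OF \<open>?X \<in> OR m\<close>]], of \<tau>]
    by (simp add: map_comp_assoc)
  moreover have "\<tau> \<circ>\<^sub>m inv_map ?X \<in> OR m"
    using OR_map_comp[OF assms(1) OR(2) OR_inv_map[OF assms(1) \<open>?X \<in> OR m\<close>]] .
  moreover have "\<rho>' \<in> OR m"
    using \<rho>'(1) OR_eq[OF assms(1)] by simp
  ultimately show ?thesis
    by blast
qed

lemma OR_two_sided_ideal_eq_rk_ne:
  assumes "m \<ge> 1" "\<sigma> \<in> OR m" "rk \<sigma> \<noteq> m"
  shows "{\<rho> \<circ>\<^sub>m \<sigma> \<circ>\<^sub>m \<rho>' | \<rho> \<rho>'. \<rho> \<in> OR m \<and> \<rho>' \<in> OR m} = {\<tau> \<in> OR m. rk \<tau> \<le> rk \<sigma>}"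
proof (intro equalityI OR_two_sided_ideal_subset[OF assms(1,2)] subsetI)
  fix \<tau> assume \<tau>: "\<tau> \<in> {\<tau> \<in> OR m. rk \<tau> \<le> rk \<sigma>}"
  show "\<tau> \<in> {\<rho> \<circ>\<^sub>m \<sigma> \<circ>\<^sub>m \<rho>' | \<rho> \<rho>'. \<rho> \<in> OR m \<and> \<rho>' \<in> OR m}"
    using assms(1,2)
  proof (cases rule: OR_cases)
    case low
    then have "rk \<tau> < m"
      using \<tau> assms(3) rk_OR_low_le by fastforce
    then show ?thesis
      using OR_low_mem_two_sided_ideal[OF assms(1) low] \<tau> OR_low_of_rk_le[OF assms(1)] by simp
  next
    case signed
    then have "ran \<sigma> = {1..2*m}"
      using ran_W by (simp add: W'_iff)
    then have "dom \<tau> \<subseteq> ran \<sigma>"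
      using \<tau> OR_partial_inj[of \<tau> m] by (simp add: partial_inj_def)
    then have "\<tau> = \<tau> \<circ>\<^sub>m \<sigma> \<circ>\<^sub>m inv_map \<sigma>"
      using partial_inj_inj_on[OF OR_partial_inj[OF assms(2)]]
      by (simp add: map_comp_assoc map_comp_inv_map map_comp_restrict_Some restrict_map_dom_subset)
    then show ?thesis
      using \<tau> OR_inv_map[OF assms(1,2)] by blast
  qed
qed

lemma OR_two_sided_ideal_eq_rk_eq:
  assumes "m \<ge> 1" "\<sigma> \<in> OR m" "rk \<sigma> = m"
  shows "{\<rho> \<circ>\<^sub>m \<sigma> \<circ>\<^sub>m \<rho>' | \<rho> \<rho>'. \<rho> \<in> OR m \<and> \<rho>' \<in> OR m}
    = {\<tau> \<in> OR m. rk \<tau> < m \<or> (rk \<tau> = m \<and> tp m \<tau> = tp m \<sigma>)}"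
proof (intro equalityI subsetI)
  fix \<tau> assume \<tau>: "\<tau> \<in> {\<rho> \<circ>\<^sub>m \<sigma> \<circ>\<^sub>m \<rho>' | \<rho> \<rho>'. \<rho> \<in> OR m \<and> \<rho>' \<in> OR m}"
  then have "\<tau> \<in> OR m" "rk \<tau> \<le> m"
    using OR_two_sided_ideal_subset[OF assms(1,2)] assms(3) by auto
  moreover have "tp m \<tau> = tp m \<sigma>" if "rk \<tau> = m"
    using \<tau> tp_two_sided_multiple[OF assms(1) _ assms(2) _ assms(3)] that by blast
  ultimately show "\<tau> \<in> {\<tau> \<in> OR m. rk \<tau> < m \<or> (rk \<tau> = m \<and> tp m \<tau> = tp m \<sigma>)}"
    by auto
next
  fix \<tau> assume \<tau>: "\<tau> \<in> {\<tau> \<in> OR m. rk \<tau> < m \<or> (rk \<tau> = m \<and> tp m \<tau> = tp m \<sigma>)}"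
  then have "OR_low m \<tau>"
    using OR_low_of_rk_le[OF assms(1)] by auto
  moreover have "OR_low m \<sigma>"
    using OR_low_of_rk_le[OF assms(1,2)] assms(3) by simp
  ultimately show "\<tau> \<in> {\<rho> \<circ>\<^sub>m \<sigma> \<circ>\<^sub>m \<rho>' | \<rho> \<rho>'. \<rho> \<in> OR m \<and> \<rho>' \<in> OR m}"
    using OR_low_mem_two_sided_ideal[OF assms(1)] \<tau> assms(3) by auto
qed

theorem proposition3p1:
  fixes m :: nat and \<sigma> :: "nat \<rightharpoonup> nat"
  assumes "m \<ge> 1" and "\<sigma> \<in> OR m"
  shows "{\<sigma> \<circ>\<^sub>m \<rho> | \<rho>. \<rho> \<in> OR m} = {\<tau> \<in> OR m. ran \<tau> \<subseteq> ran \<sigma>}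
    \<and> {\<rho> \<circ>\<^sub>m \<sigma> | \<rho>. \<rho> \<in> OR m} = {\<tau> \<in> OR m. dom \<tau> \<subseteq> dom \<sigma>}
    \<and> (rk \<sigma> \<noteq> m \<longrightarrow>
           {\<rho> \<circ>\<^sub>m \<sigma> \<circ>\<^sub>m \<rho>' | \<rho> \<rho>'. \<rho> \<in> OR m \<and> \<rho>' \<in> OR m}
             = {\<tau> \<in> OR m. rk \<tau> \<le> rk \<sigma>})
    \<and> (rk \<sigma> = m \<longrightarrow>
           {\<rho> \<circ>\<^sub>m \<sigma> \<circ>\<^sub>m \<rho>' | \<rho> \<rho>'. \<rho> \<in> OR m \<and> \<rho>' \<in> OR m}
             = {\<tau> \<in> OR m. rk \<tau> < m \<or> (rk \<tau> = m \<and> tp m \<tau> = tp m \<sigma>)})"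
  using OR_right_ideal_eq[OF assms] OR_left_ideal_eq[OF assms]
    OR_two_sided_ideal_eq_rk_ne[OF assms] OR_two_sided_ideal_eq_rk_eq[OF assms] by blast

end
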